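(* Let $(\mathcal{X},\mathcal{Y},u,S)$ be a Blackwell approachability game in which every halfspace $H\supseteq S$ is forceable. Then for every horizon $T\ge1$ there is a strategy for Player 1 which, at each time $t\le T$, receives a prediction $v^t\in\mathbb{R}^d$ of the next payoff (arbitrary, revealed before $x^t$ is chosen) and chooses $x^t\in\mathcal{X}$ depending only on $v^1,\dots,v^t$ and past payoffs, such that for every sequence of predictions and every (possibly adaptive) sequence of Player 2 actions $y^1,\dots,y^T\in\mathcal{Y}$, \[ \min_{\hat{s}\in S}\Big\|\hat{s}-\frac1T\sum_{t=1}^Tu(x^t,y^t)\Big\|_2\le\frac{1}{\sqrt T}\Big(1+\frac2T\sum_{t=1}^T\|u(x^t,y^t)-v^t\|_2^2\Big). \]
   Context: A Blackwell approachability game $(\mathcal{X},\mathcal{Y},u,S)$ consists of compact convex action sets $\mathcal{X},\mathcal{Y}$, a biaffine vector payoff $u:\mathcal{X}\times\mathcal{Y}\to\mathbb{R}^d$, and a closed convex target set $S\subseteq\mathbb{R}^d$; at each time $t$ Player 1 chooses $x^t\in\mathcal{X}$, then Player 2 chooses $y^t\in\mathcal{Y}$, and Player 1 receives $u(x^t,y^t)$. A halfspace $H=\{z:\langle a,z\rangle\le b\}$ is forceable if there exists $x^*\in\mathcal{X}$ with $u(x^*,y)\in H$ for all $y\in\mathcal{Y}$. *)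

theory Defs
  imports "HOL-Analysis.Analysis"
begin

definition biaffine_on ::
  "'a::real_vector set \<Rightarrow> 'b::real_vector set \<Rightarrow> ('a \<Rightarrow> 'b \<Rightarrow> 'c::real_vector) \<Rightarrow> bool" where
  "biaffine_on X Y u \<longleftrightarrow>
     (\<forall>x\<in>X. \<forall>x'\<in>X. \<forall>y\<in>Y. \<forall>l::real. 0 \<le> l \<and> l \<le> 1 \<longrightarrow>
        u ((1 - l) *\<^sub>R x + l *\<^sub>R x') y = (1 - l) *\<^sub>R u x y + l *\<^sub>R u x' y) \<and>
     (\<forall>x\<in>X. \<forall>y\<in>Y. \<forall>y'\<in>Y. \<forall>l::real. 0 \<le> l \<and> l \<le> 1 \<longrightarrow>
        u x ((1 - l) *\<^sub>R y + l *\<^sub>R y') = (1 - l) *\<^sub>R u x y + l *\<^sub>R u x y')"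

definition blackwell_game ::
  "'a::euclidean_space set \<Rightarrow> 'b::euclidean_space set \<Rightarrow> ('a \<Rightarrow> 'b \<Rightarrow> 'c::euclidean_space)
   \<Rightarrow> 'c set \<Rightarrow> bool" where
  "blackwell_game X Y u S \<longleftrightarrow>
     compact X \<and> convex X \<and> X \<noteq> {} \<and> compact Y \<and> convex Y \<and> Y \<noteq> {} \<and>
     biaffine_on X Y u \<and> closed S \<and> convex S \<and> S \<noteq> {}"

definition halfspace :: "'c::euclidean_space \<Rightarrow> real \<Rightarrow> 'c set" where
  "halfspace a b = {z. inner a z \<le> b}"

definition forceable ::
  "'a set \<Rightarrow> 'b set \<Rightarrow> ('a \<Rightarrow> 'b \<Rightarrow> 'c) \<Rightarrow> 'c set \<Rightarrow> bool" where
  "forceable X Y u H \<longleftrightarrow> (\<exists>xs\<in>X. \<forall>y\<in>Y. u xs y \<in> H)"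

end

theory Submission
  imports Defs
begin

text \<open>
At time t Player 1 aims at the projection c onto S of the optimistic average
w = (G + v) / t, where G is the sum of the past payoffs and v the prediction, and forces
the halfspace through c with normal w - c, which contains S. Measured by the potential
|G - t c|^2 a round then costs at most |g - v|^2, where g is the realised payoff;
hence |G_T - T c_T|^2 <= E := sum |g - v|^2, and the bound follows from
sqrt E <= sqrt T + 2 E / sqrt T.
\<close>

lemma closest_point_halfspace:
  fixes S :: "'c::euclidean_space set" and w :: 'c
  assumes "closed S" "convex S"
  defines "c \<equiv> closest_point S w"
  shows "S \<subseteq> halfspace (w - c) (inner (w - c) c)"
  using closest_point_dot[OF assms(2,1)] by (auto simp: halfspace_def c_def inner_diff_right)

lemma forcing_action_exists:
  fixes w :: "'c::euclidean_space"
  assumes game: "blackwell_game X Y u S"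
    and force: "\<And>a b. a \<noteq> 0 \<Longrightarrow> S \<subseteq> halfspace a b \<Longrightarrow> forceable X Y u (halfspace a b)"
  defines "c \<equiv> closest_point S w"
  shows "\<exists>x\<in>X. \<forall>y\<in>Y. inner (w - c) (u x y - c) \<le> 0"
proof (cases "w = c")
  case True
  then show ?thesis using game by (auto simp: blackwell_game_def)
next
  case False
  have "S \<subseteq> halfspace (w - c) (inner (w - c) c)"
    using game closest_point_halfspace by (auto simp: blackwell_game_def c_def)
  from force[OF _ this] False show ?thesis
    by (auto simp: forceable_def halfspace_def inner_diff_right)
qed

lemma residual_step:
  fixes U v g s :: "'c::euclidean_space" and t :: real
  assumes "closed S" "convex S" "s \<in> S" "t \<ge> 1"
    and c: "c = closest_point S ((1 / t) *\<^sub>R (U + v))"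
    and forced: "inner ((1 / t) *\<^sub>R (U + v) - c) (g - c) \<le> 0"
  shows "(norm (U + g - t *\<^sub>R c))\<^sup>2 \<le> (norm (U - (t - 1) *\<^sub>R s))\<^sup>2 + (norm (g - v))\<^sup>2"
proof -
  define a where "a = U + v - t *\<^sub>R c"
  define r where "r = U - (t - 1) *\<^sub>R s"
  have a_scaled: "a = t *\<^sub>R ((1 / t) *\<^sub>R (U + v) - c)"
    using \<open>t \<ge> 1\<close> by (simp add: a_def algebra_simps)
  have "inner a (g - c) \<le> 0"
    using forced \<open>t \<ge> 1\<close> by (simp add: a_scaled mult_nonneg_nonpos)
  have "(t - 1) * inner a (s - c) \<le> 0"
    using closest_point_dot[OF assms(2,1,3)] \<open>t \<ge> 1\<close>
    by (simp add: a_scaled c mult_nonneg_nonpos)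
  have "c - v = r + (t - 1) *\<^sub>R (s - c) - a"
    by (simp add: a_def r_def algebra_simps)
  have "(norm (U + g - t *\<^sub>R c))\<^sup>2 = (norm (a + (g - v)))\<^sup>2"
    by (simp add: a_def algebra_simps)
  also have "\<dots> = (norm a)\<^sup>2 + 2 * inner a (g - c) + 2 * inner a (c - v) + (norm (g - v))\<^sup>2"
    by (simp add: power2_norm_eq_inner inner_add inner_diff inner_commute algebra_simps)
  also have "\<dots> \<le> (norm a)\<^sup>2 + 2 * inner a (c - v) + (norm (g - v))\<^sup>2"
    using \<open>inner a (g - c) \<le> 0\<close> by simp
  also have "\<dots> = 2 * inner a r - (norm a)\<^sup>2 + 2 * ((t - 1) * inner a (s - c)) + (norm (g - v))\<^sup>2"
    unfolding \<open>c - v = _\<close> by (simp add: power2_norm_eq_inner inner_add inner_diff)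
  also have "\<dots> \<le> 2 * inner a r - (norm a)\<^sup>2 + (norm (g - v))\<^sup>2"
    using \<open>(t - 1) * inner a (s - c) \<le> 0\<close> by simp
  also have "\<dots> \<le> (norm r)\<^sup>2 + (norm (g - v))\<^sup>2"
    using power2_norm_eq_inner[of "a - r"] inner_ge_zero[of "a - r"]
    by (simp add: power2_norm_eq_inner inner_diff inner_commute)
  finally show ?thesis
    by (simp add: r_def)
qed

definition optimistic_average :: "(nat \<Rightarrow> 'c) \<Rightarrow> (nat \<Rightarrow> 'c) \<Rightarrow> nat \<Rightarrow> 'c::real_vector" where
  "optimistic_average g v t = (1 / real t) *\<^sub>R (sum g {1..<t} + v t)"

lemma residual_bound:
  fixes g v :: "nat \<Rightarrow> 'c::euclidean_space"
  assumes S: "closed S" "convex S" "S \<noteq> {}"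
  defines "c \<equiv> \<lambda>t. closest_point S (optimistic_average g v t)"
  assumes forced: "\<And>t. t \<in> {1..n} \<Longrightarrow> inner (optimistic_average g v t - c t) (g t - c t) \<le> 0"
  shows "(norm (sum g {1..n} - real n *\<^sub>R c n))\<^sup>2 \<le> (\<Sum>t=1..n. (norm (g t - v t))\<^sup>2)"
  using forced
proof (induction n)
  case 0
  then show ?case by simp
next
  case (Suc n)
  \<comment> \<open>For n = 0 the comparison point c 0 is irrelevant, as it enters with weight t - 1 = 0.\<close>
  have "c n \<in> S"
    using S closest_point_in_set by (simp add: c_def)
  from residual_step[OF S(1,2) this, of "real (Suc n)" "c (Suc n)" "sum g {1..n}" "v (Suc n)"]
  have "(norm (sum g {1..Suc n} - real (Suc n) *\<^sub>R c (Suc n)))\<^sup>2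
        \<le> (norm (sum g {1..n} - real n *\<^sub>R c n))\<^sup>2 + (norm (g (Suc n) - v (Suc n)))\<^sup>2"
    using Suc.prems[of "Suc n"]
    by (simp add: c_def optimistic_average_def atLeastLessThanSuc_atLeastAtMost add.commute)
  with Suc show ?case by simp
qed

lemma sqrt_div_le_bound:
  fixes E T :: real
  assumes "E \<ge> 0" "T > 0"
  shows "sqrt E / T \<le> (1 / sqrt T) * (1 + (2 / T) * E)"
proof -
  have "0 \<le> (sqrt E - sqrt T)\<^sup>2"
    by simp
  then have "2 * (sqrt E * sqrt T) \<le> E + T"
    using assms by (simp add: power2_diff)
  then have "sqrt E * sqrt T \<le> T + 2 * E"
    using assms by linarith
  have "sqrt E / T = sqrt E * sqrt T / (sqrt T * T)"
    using assms by simp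
  also have "\<dots> \<le> (T + 2 * E) / (sqrt T * T)"
    by (rule divide_right_mono) (use \<open>sqrt E * sqrt T \<le> T + 2 * E\<close> assms in auto)
  also have "\<dots> = (1 / sqrt T) * (1 + (2 / T) * E)"
    using assms by (simp add: field_simps)
  finally show ?thesis .
qed

lemma infdist_average_le:
  fixes g v :: "nat \<Rightarrow> 'c::euclidean_space"
  assumes S: "closed S" "convex S" "S \<noteq> {}" and "T \<ge> 1"
  defines "c \<equiv> \<lambda>t. closest_point S (optimistic_average g v t)"
  assumes forced: "\<And>t. t \<in> {1..T} \<Longrightarrow> inner (optimistic_average g v t - c t) (g t - c t) \<le> 0"
  shows "infdist ((1 / real T) *\<^sub>R sum g {1..T}) S
           \<le> (1 / sqrt (real T)) * (1 + (2 / real T) * (\<Sum>t=1..T. (norm (g t - v t))\<^sup>2))"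
proof -
  let ?E = "\<Sum>t=1..T. (norm (g t - v t))\<^sup>2"
  have "c T \<in> S"
    using S closest_point_in_set by (simp add: c_def)
  then have "infdist ((1 / real T) *\<^sub>R sum g {1..T}) S \<le> dist ((1 / real T) *\<^sub>R sum g {1..T}) (c T)"
    by (rule infdist_le)
  also have "\<dots> = norm (sum g {1..T} - real T *\<^sub>R c T) / real T"
  proof -
    have "(1 / real T) *\<^sub>R sum g {1..T} - c T = (1 / real T) *\<^sub>R (sum g {1..T} - real T *\<^sub>R c T)"
      using \<open>T \<ge> 1\<close> by (simp add: algebra_simps)
    then show ?thesis
      by (simp add: dist_norm)
  qed
  also have "\<dots> \<le> sqrt ?E / real T"
    using residual_bound[OF S, of n g v for n] forced \<open>T \<ge> 1\<close>
    by (simp add: c_def divide_right_mono real_le_rsqrt)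
  also have "\<dots> \<le> (1 / sqrt (real T)) * (1 + (2 / real T) * ?E)"
    using \<open>T \<ge> 1\<close> by (intro sqrt_div_le_bound) (simp_all add: sum_nonneg)
  finally show ?thesis .
qed

text \<open>At time t the arguments are vs = [v_1, ..., v_t] and gs = [g_1, ..., g_(t-1)], so t = length vs.\<close>

definition predictive_strategy ::
  "'a set \<Rightarrow> 'b set \<Rightarrow> ('a \<Rightarrow> 'b \<Rightarrow> 'c::euclidean_space) \<Rightarrow> 'c set \<Rightarrow> 'c list \<Rightarrow> 'c list \<Rightarrow> 'a"
  where
  "predictive_strategy X Y u S vs gs =
     (let w = (1 / real (length vs)) *\<^sub>R (sum_list gs + last vs); c = closest_point S w
      in SOME x. x \<in> X \<and> (\<forall>y\<in>Y. inner (w - c) (u x y - c) \<le> 0))"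

lemma predictive_strategy_forces:
  fixes vs gs :: "'c::euclidean_space list"
  assumes game: "blackwell_game X Y u S"
    and force: "\<And>a b. a \<noteq> 0 \<Longrightarrow> S \<subseteq> halfspace a b \<Longrightarrow> forceable X Y u (halfspace a b)"
  defines "w \<equiv> (1 / real (length vs)) *\<^sub>R (sum_list gs + last vs)"
  defines "c \<equiv> closest_point S w"
  shows "predictive_strategy X Y u S vs gs \<in> X"
    and "\<forall>y\<in>Y. inner (w - c) (u (predictive_strategy X Y u S vs gs) y - c) \<le> 0"
  using someI_ex[OF forcing_action_exists[OF game force, of w, folded c_def, unfolded Bex_def]]
  by (simp_all add: predictive_strategy_def Let_def w_def c_def)

theorem mainTheorem6:
  fixes X :: "'a::euclidean_space set" and Y :: "'b::euclidean_space set"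
    and u :: "'a \<Rightarrow> 'b \<Rightarrow> 'c::euclidean_space" and S :: "'c set"
  assumes game: "blackwell_game X Y u S"
    and force: "\<And>a b. a \<noteq> 0 \<Longrightarrow> S \<subseteq> halfspace a b \<Longrightarrow> forceable X Y u (halfspace a b)"
    and T: "T \<ge> (1::nat)"
  shows "\<exists>\<sigma> :: 'c list \<Rightarrow> 'c list \<Rightarrow> 'a.
           (\<forall>vs gs. \<sigma> vs gs \<in> X) \<and>
           (\<forall>(v :: nat \<Rightarrow> 'c) (y :: nat \<Rightarrow> 'b) (x :: nat \<Rightarrow> 'a).
              (\<forall>t\<in>{1..T}. y t \<in> Y) \<longrightarrow>
              (\<forall>t\<in>{1..T}. x t = \<sigma> (map v [1..<Suc t]) (map (\<lambda>s. u (x s) (y s)) [1..<t])) \<longrightarrow>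
              infdist ((1 / real T) *\<^sub>R (\<Sum>t=1..T. u (x t) (y t))) S
                \<le> (1 / sqrt (real T)) *
                   (1 + (2 / real T) * (\<Sum>t=1..T. (norm (u (x t) (y t) - v t))\<^sup>2)))"
proof (intro exI[of _ "predictive_strategy X Y u S"] conjI allI impI)
  note strategy = predictive_strategy_forces[OF game force]
  show "predictive_strategy X Y u S vs gs \<in> X" for vs gs
    by (rule strategy(1))
  fix v :: "nat \<Rightarrow> 'c" and y :: "nat \<Rightarrow> 'b" and x :: "nat \<Rightarrow> 'a"
  assume y: "\<forall>t\<in>{1..T}. y t \<in> Y"
    and x: "\<forall>t\<in>{1..T}. x t = predictive_strategy X Y u S (map v [1..<Suc t]) (map (\<lambda>s. u (x s) (y s)) [1..<t])"
  define g where "g = (\<lambda>s. u (x s) (y s))"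
  have S: "closed S" "convex S" "S \<noteq> {}"
    using game by (auto simp: blackwell_game_def)
  have "inner (optimistic_average g v t - closest_point S (optimistic_average g v t))
          (g t - closest_point S (optimistic_average g v t)) \<le> 0" if "t \<in> {1..T}" for t
    using strategy(2)[of "map v [1..<Suc t]" "map g [1..<t]"] x y that
    by (simp add: g_def optimistic_average_def interv_sum_list_conv_sum_set_nat)
  from infdist_average_le[OF S T this] show "infdist ((1 / real T) *\<^sub>R (\<Sum>t=1..T. u (x t) (y t))) S
      \<le> (1 / sqrt (real T)) * (1 + (2 / real T) * (\<Sum>t=1..T. (norm (u (x t) (y t) - v t))\<^sup>2))"
    by (simp add: g_def)
qed

end
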